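(* Define sequences $E=(E_n)_{n\ge1}$ and $Q=(q_n)_{n\ge1}$ by concatenating, for $m=1,2,3,\dots$, the block $(0,2,4,\dots,2m-2)$ of length $m$ for $E$ and the block $(2m,2m,\dots,2m)$ of length $m$ for $Q$; thus $E=(0,\,0,2,\,0,2,4,\,0,2,4,6,\dots)$ and $Q=(2,\,4,4,\,6,6,6,\,8,8,8,8,\dots)$. Let $x=\sum_{n=1}^\infty\frac{E_n}{q_1q_2\cdots q_n}$. Then $x$ is $Q$-distribution normal, but $x/2$ is not $Q$-distribution normal.
   Context: Let $T_{Q,n}(x)=\left(\prod_{j=1}^n q_j\right)x \bmod 1$. A real $x$ is $Q$-distribution normal if $(T_{Q,n}(x))_{n\ge0}$ is uniformly distributed modulo $1$. *)

theory Defs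
  imports Complex_Main
begin

definition uniformly_distributed_mod1 :: "(nat \<Rightarrow> real) \<Rightarrow> bool" where
  "uniformly_distributed_mod1 s \<longleftrightarrow>
     (\<forall>a b. 0 \<le> a \<and> a < b \<and> b \<le> 1 \<longrightarrow>
        (\<lambda>N. real (card {n. n < N \<and> a \<le> frac (s n) \<and> frac (s n) < b}) / real N)
          \<longlonglongrightarrow> b - a)"

text \<open>Q is a sequence of integers q_1, q_2, ... (index 0 unused).
  T_{Q,n}(x) = (q_1 \<cdots> q_n) x mod 1, for n \<ge> 0.\<close>
definition T_Q :: "(nat \<Rightarrow> nat) \<Rightarrow> nat \<Rightarrow> real \<Rightarrow> real" where
  "T_Q q n x = frac ((\<Prod>j=1..n. real (q j)) * x)"

definition Q_distribution_normal :: "(nat \<Rightarrow> nat) \<Rightarrow> real \<Rightarrow> bool" where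
  "Q_distribution_normal q x \<longleftrightarrow> uniformly_distributed_mod1 (\<lambda>n. T_Q q n x)"

definition Eblock :: "nat \<Rightarrow> nat list" where
  "Eblock m = map (\<lambda>i. 2 * i) [0..<m]"

definition Qblock :: "nat \<Rightarrow> nat list" where
  "Qblock m = replicate m (2 * m)"

text \<open>n-th term (n \<ge> 1) of the concatenation of blocks m = 1,2,3,...; the first n blocks
  already have total length \<ge> n, so it suffices to concatenate blocks 1..n.\<close>
definition Eseq :: "nat \<Rightarrow> nat" where
  "Eseq n = concat (map Eblock [1..<n+1]) ! (n - 1)"

definition Qseq :: "nat \<Rightarrow> nat" where
  "Qseq n = concat (map Qblock [1..<n+1]) ! (n - 1)"

definition x_ex :: real where
  "x_ex = (\<Sum>n. real (Eseq (Suc n)) / (\<Prod>j=1..Suc n. real (Qseq j)))"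

end

theory Submission
  imports Defs "HOL-Real_Asymp.Real_Asymp"
begin

(* Write x = sum_n E_n / (q_1 ... q_n) and let r_N = q_1 ... q_N x - A_N be the
   remainder after removing the integer part A_N of the first N terms.  Because every digit
   satisfies E_n <= q_n - 2, one has 0 <= r_N < 1, so T_{Q,N}(x) = r_N, and the recursion
   r_{N+1} = q_{N+1} r_N - E_{N+1} confines q_{N+1} r_N to [E_{N+1}, E_{N+1} + 1].
   In the m-th block (q = 2(m+1), E = 2k) this puts r_N into the k-th of the m+1 equal
   subintervals of [0,1).  A sequence visiting the subintervals of [0,1) in this way has
   discrepancy O(sqrt N), hence is uniformly distributed.  Since all q_n and E_n are even,
   A_N is even and T_{Q,N}(x/2) = r_N / 2 < 1/2, which is never uniformly distributed. *)

(* Triangular numbers: the m-th block of E and Q starts at position tri m + 1. *)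
fun tri :: "nat \<Rightarrow> nat" where
  "tri 0 = 0"
| "tri (Suc m) = tri m + Suc m"

(* The first n blocks already cover position n, as used in the definitions of E and Q. *)
lemma tri_ge: "m \<le> tri m"
  by (induction m) auto

lemma two_tri: "2 * tri m = m * (m + 1)"
  by (induction m) auto

lemma tri_decomp: "\<exists>m k. k \<le> m \<and> n = tri m + k"
proof (induction n)
  case 0
  show ?case by (intro exI[of _ 0]) auto
next
  case (Suc n)
  then obtain m k where "k \<le> m" "n = tri m + k" by blast
  then show ?case
  proof (cases "k < m")
    case True
    with \<open>n = tri m + k\<close> show ?thesis by (intro exI[of _ m] exI[of _ "Suc k"]) auto
  next
    case False
    with \<open>n = tri m + k\<close> \<open>k \<le> m\<close> show ?thesis by (intro exI[of _ "Suc m"] exI[of _ 0]) auto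
  qed
qed

lemma length_concat_blocks:
  assumes "\<And>i. length (f i) = i"
  shows "length (concat (map f [1..<m+1])) = tri m"
  using assms by (induction m) auto

lemma nth_concat_blocks:
  assumes "\<And>i. length (f i) = i" and "Suc m \<le> L" and "k \<le> m"
  shows "concat (map f [1..<L+1]) ! (tri m + k) = f (Suc m) ! k"
proof -
  have "[1..<L+1] = [1..<m+1] @ (m+1) # [m+2..<L+1]"
    using assms(2) upt_add_eq_append[of 1 "m+1" "L - m"] upt_conv_Cons by simp
  then show ?thesis
    using assms length_concat_blocks[of f m] by (simp add: nth_append)
qed

lemma Eseq_Qseq_at:
  assumes "k \<le> m"
  shows "Eseq (Suc (tri m + k)) = 2 * k" and "Qseq (Suc (tri m + k)) = 2 * Suc m"
proof -
  have L: "Suc m \<le> Suc (tri m + k)" using tri_ge[of m] by simp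
  show "Eseq (Suc (tri m + k)) = 2 * k"
    unfolding Eseq_def using nth_concat_blocks[of Eblock m, OF _ L assms] assms
    by (simp add: Eblock_def del: upt_Suc)
  show "Qseq (Suc (tri m + k)) = 2 * Suc m"
    unfolding Qseq_def using nth_concat_blocks[of Qblock m, OF _ L assms] assms
    by (simp add: Qblock_def del: upt_Suc replicate_Suc)
qed

lemma Eseq_Qseq_bounds:
  "2 \<le> Qseq (Suc n)" "Eseq (Suc n) + 2 \<le> Qseq (Suc n)"
  "even (Qseq (Suc n))" "even (Eseq (Suc n))"
  using tri_decomp[of n] Eseq_Qseq_at by fastforce+

locale cantor_digits =
  fixes q e :: "nat \<Rightarrow> nat"
  assumes base_ge2: "2 \<le> q (Suc n)"
    and digit_bound: "e (Suc n) + 2 \<le> q (Suc n)"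
begin

definition partial_prod :: "nat \<Rightarrow> real" where
  "partial_prod N = (\<Prod>j=1..N. real (q j))"

definition series_term :: "nat \<Rightarrow> real" where
  "series_term n = real (e (Suc n)) / partial_prod (Suc n)"

definition cantor_sum :: real where
  "cantor_sum = (\<Sum>n. series_term n)"

primrec int_part :: "nat \<Rightarrow> nat" where
  "int_part 0 = 0"
| "int_part (Suc N) = q (Suc N) * int_part N + e (Suc N)"

definition remainder :: "nat \<Rightarrow> real" where
  "remainder N = partial_prod N * cantor_sum - real (int_part N)"

lemma partial_prod_Suc: "partial_prod (Suc N) = partial_prod N * real (q (Suc N))"
  unfolding partial_prod_def by (simp add: prod.nat_ivl_Suc' mult.commute)

lemma base_pos: "0 < real (q (Suc n))"
  using base_ge2[of n] by simp

lemma digit_bound_real: "real (e (Suc n)) + 2 \<le> real (q (Suc n))"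
  using digit_bound[of n] by linarith

lemma partial_prod_pos: "0 < partial_prod N"
proof (induction N)
  case (Suc N)
  then show ?case using base_pos[of N] by (simp add: partial_prod_Suc)
qed (simp add: partial_prod_def)

lemma partial_prod_growth: "partial_prod N * 2 ^ k \<le> partial_prod (N + k)"
proof (induction k)
  case (Suc k)
  have "partial_prod N * 2 ^ Suc k = (partial_prod N * 2 ^ k) * 2" by simp
  also have "\<dots> \<le> partial_prod (N + k) * real (q (Suc (N + k)))"
    using Suc base_ge2[of "N + k"] partial_prod_pos[of N] partial_prod_pos[of "N + k"]
    by (intro mult_mono) auto
  finally show ?case by (simp add: partial_prod_Suc)
qed simp

lemma series_term_nonneg: "0 \<le> series_term n"
  unfolding series_term_def using partial_prod_pos[of "Suc n"] by simp

lemma series_term_le: "series_term n \<le> 1 / partial_prod n"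
proof -
  have "series_term n = real (e (Suc n)) / (partial_prod n * real (q (Suc n)))"
    unfolding series_term_def partial_prod_Suc ..
  also have "\<dots> \<le> real (q (Suc n)) / (partial_prod n * real (q (Suc n)))"
    using digit_bound[of n] partial_prod_pos[of n] base_pos[of n]
    by (intro divide_right_mono) auto
  also have "\<dots> = 1 / partial_prod n" using base_pos[of n] by simp
  finally show ?thesis .
qed

lemma series_term_geometric: "series_term (k + N) \<le> (1 / partial_prod N) * (1/2) ^ k"
proof -
  have "series_term (k + N) \<le> 1 / partial_prod (N + k)"
    using series_term_le[of "N + k"] by (simp add: add.commute)
  also have "\<dots> \<le> 1 / (partial_prod N * 2 ^ k)"
    using partial_prod_growth[of N k] partial_prod_pos[of N] partial_prod_pos[of "N + k"]
    by (intro divide_left_mono) auto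
  also have "\<dots> = (1 / partial_prod N) * (1/2) ^ k" by (simp add: power_one_over)
  finally show ?thesis .
qed

lemma summable_tail: "summable (\<lambda>k. series_term (k + N))"
  by (rule summable_comparison_test'[where g="\<lambda>k. (1 / partial_prod N) * (1/2) ^ k"])
     (use series_term_geometric series_term_nonneg in \<open>auto simp: summable_geometric\<close>)

lemma int_part_eq: "real (int_part N) = partial_prod N * (\<Sum>n<N. series_term n)"
proof (induction N)
  case (Suc N)
  then show ?case using base_pos[of N] partial_prod_pos[of N]
    by (simp add: partial_prod_Suc series_term_def field_simps)
qed simp

lemma remainder_eq_tail: "remainder N = partial_prod N * (\<Sum>k. series_term (k + N))"
proof -
  have "cantor_sum = (\<Sum>k. series_term (k + N)) + (\<Sum>n<N. series_term n)"
    unfolding cantor_sum_def using summable_tail[of 0]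
    by (intro suminf_split_initial_segment) simp
  then show ?thesis
    unfolding remainder_def int_part_eq by (simp add: algebra_simps)
qed

lemma remainder_nonneg: "0 \<le> remainder N"
  unfolding remainder_eq_tail
  using partial_prod_pos[of N] suminf_nonneg[OF summable_tail] series_term_nonneg by simp

lemma remainder_le_2: "remainder N \<le> 2"
proof -
  have "(\<Sum>k. series_term (k + N)) \<le> (\<Sum>k. (1 / partial_prod N) * (1/2) ^ k)"
    by (rule suminf_le)
       (use series_term_geometric summable_tail in \<open>auto simp: summable_geometric\<close>)
  also have "\<dots> = 2 / partial_prod N"
    using suminf_mult[OF summable_geometric[of "1/2::real"], of "1 / partial_prod N"]
      suminf_geometric[of "1/2::real"] by simp
  finally show ?thesis
    unfolding remainder_eq_tail using partial_prod_pos[of N] by (simp add: field_simps)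
qed

lemma remainder_Suc: "remainder (Suc N) = real (q (Suc N)) * remainder N - real (e (Suc N))"
  unfolding remainder_def by (simp add: partial_prod_Suc algebra_simps)

(* One further step of the recursion turns r_{N+2} <= 2 into r_{N+1} <= 1 (using e <= q - 2);
   together with r_{N+1} >= 0 this confines q_{N+1} r_N to [e_{N+1}, e_{N+1} + 1]. *)
lemma remainder_digit_window:
  "real (e (Suc N)) \<le> real (q (Suc N)) * remainder N"
  "real (q (Suc N)) * remainder N \<le> real (e (Suc N)) + 1"
proof -
  have "remainder (Suc (Suc N)) \<le> 2" by (rule remainder_le_2)
  then have "real (q (Suc (Suc N))) * remainder (Suc N) \<le> real (q (Suc (Suc N)))"
    using remainder_Suc[of "Suc N"] digit_bound_real[of "Suc N"] by linarith
  then have "remainder (Suc N) \<le> 1"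
    using base_pos[of "Suc N"] by simp
  then show "real (e (Suc N)) \<le> real (q (Suc N)) * remainder N"
    and "real (q (Suc N)) * remainder N \<le> real (e (Suc N)) + 1"
    using remainder_Suc[of N] remainder_nonneg[of "Suc N"] by simp_all
qed

(* Strictness comes from the digit bound e <= q - 2. *)
lemma remainder_lt_1: "remainder N < 1"
proof -
  have "real (q (Suc N)) * remainder N < real (q (Suc N))"
    using remainder_digit_window(2)[of N] digit_bound_real[of N] by linarith
  then show ?thesis using base_pos[of N] by simp
qed

lemma T_Q_cantor_sum: "T_Q q N cantor_sum = remainder N"
proof -
  have "T_Q q N cantor_sum = frac (remainder N + real (int_part N))"
    unfolding T_Q_def remainder_def partial_prod_def by simp
  also have "\<dots> = remainder N"
    using remainder_nonneg[of N] remainder_lt_1[of N] by (simp add: frac_add_int_right frac_eq)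
  finally show ?thesis .
qed

(* With even bases and digits the integer part is even, so halving the sum halves
   the remainder: T_{Q,N}(x/2) lies in [0, 1/2). *)
lemma T_Q_half_cantor_sum:
  assumes "\<And>n. even (q (Suc n))" and "\<And>n. even (e (Suc n))"
  shows "T_Q q N (cantor_sum / 2) = remainder N / 2"
proof -
  have "even (int_part N)"
    by (induction N) (use assms in auto)
  then obtain c where c: "int_part N = 2 * c" by blast
  have "T_Q q N (cantor_sum / 2) = frac (remainder N / 2 + real c)"
    unfolding T_Q_def remainder_def partial_prod_def c by (simp add: field_simps)
  also have "\<dots> = remainder N / 2"
    using remainder_nonneg[of N] remainder_lt_1[of N] by (simp add: frac_add_int_right frac_eq)
  finally show ?thesis .
qed

end

lemma nat_interval_eq:
  "{k::nat. \<alpha> \<le> real k \<and> real k < \<beta>} = {nat \<lceil>\<alpha>\<rceil>..<nat \<lceil>\<beta>\<rceil>}"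
  by (auto simp: nat_le_iff zless_nat_eq_int_zless ceiling_le_iff less_ceiling_iff)

lemma card_nat_interval:
  fixes \<alpha> \<beta> :: real
  shows "\<alpha> \<le> \<beta> \<Longrightarrow> real (card {k::nat. \<alpha> \<le> real k \<and> real k < \<beta>}) \<le> \<beta> - \<alpha> + 1"
    and "0 \<le> \<alpha> \<Longrightarrow> \<beta> - \<alpha> - 1 \<le> real (card {k::nat. \<alpha> \<le> real k \<and> real k < \<beta>})"
  unfolding nat_interval_eq card_atLeastLessThan
  by (cases "\<lceil>\<alpha>\<rceil> \<le> \<lceil>\<beta>\<rceil>"; cases "0 \<le> \<lceil>\<alpha>\<rceil>"; simp add: of_nat_diff; linarith)+

lemma block_count:
  fixes v :: "nat \<Rightarrow> real"
  assumes ab: "0 \<le> a" "a < b" "b \<le> 1"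
    and V: "\<And>k. k < n \<Longrightarrow> real k / n \<le> v k \<and> v k < real (Suc k) / n"
  shows "\<bar>real (card {k. k < n \<and> a \<le> v k \<and> v k < b}) - real n * (b - a)\<bar> \<le> 2"
proof -
  define S where "S = {k. k < n \<and> a \<le> v k \<and> v k < b}"
  define I where "I \<alpha> \<beta> = {k::nat. \<alpha> \<le> real k \<and> real k < \<beta>}" for \<alpha> \<beta>
  have "S \<subseteq> I (real n * a - 1) (real n * b)"
  proof
    fix k assume "k \<in> S"
    then have k: "k < n" "a \<le> v k" "v k < b" unfolding S_def by auto
    then have "a < real (Suc k) / n" "real k / n < b" using V[OF k(1)] by linarith+
    then show "k \<in> I (real n * a - 1) (real n * b)"
      using k(1) unfolding I_def by (simp add: field_simps)
  qed
  then have "real (card S) \<le> real (card (I (real n * a - 1) (real n * b)))"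
    unfolding I_def nat_interval_eq by (simp only: of_nat_le_iff) (rule card_mono; simp)
  also have "\<dots> \<le> real n * (b - a) + 2"
  proof -
    have "real n * a \<le> real n * b" using ab by (simp add: mult_left_mono)
    then show ?thesis
      unfolding I_def using card_nat_interval(1)[of "real n * a - 1" "real n * b"]
      by (simp add: algebra_simps)
  qed
  finally have upper: "real (card S) \<le> real n * (b - a) + 2" .
  have "I (real n * a) (real n * b - 1) \<subseteq> S"
  proof
    fix k assume "k \<in> I (real n * a) (real n * b - 1)"
    then have k: "real n * a \<le> real k" "real k + 1 < real n * b" unfolding I_def by auto
    moreover have "real n * b \<le> real n" using ab by (simp add: mult_left_le)
    ultimately have "k < n" by linarith
    with k have "a \<le> real k / n" "real (Suc k) / n \<le> b" by (simp_all add: field_simps)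
    with V[OF \<open>k < n\<close>] \<open>k < n\<close> show "k \<in> S" unfolding S_def by auto
  qed
  then have "real (card (I (real n * a) (real n * b - 1))) \<le> real (card S)"
    unfolding S_def by (simp add: card_mono)
  moreover have "real n * (b - a) - 2 \<le> real (card (I (real n * a) (real n * b - 1)))"
    unfolding I_def using card_nat_interval(2)[of "real n * a" "real n * b - 1"] ab
    by (simp add: algebra_simps)
  ultimately show ?thesis using upper unfolding S_def by linarith
qed

lemma sum_lessThan_add: "(\<Sum>n<a + b. g n) = (\<Sum>n<a. g n) + (\<Sum>k<b. g (a + k))"
  for g :: "nat \<Rightarrow> 'a::comm_monoid_add"
  by (induction b) (auto simp: add.assoc)

lemma sum_tri_blocks:
  "(\<Sum>n<tri m + j. g n) = (\<Sum>i<m. \<Sum>k<Suc i. g (tri i + k)) + (\<Sum>k<j. g (tri m + k))"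
  for g :: "nat \<Rightarrow> 'a::comm_monoid_add"
proof -
  have "(\<Sum>n<tri m. g n) = (\<Sum>i<m. \<Sum>k<Suc i. g (tri i + k))"
    by (induction m) (simp_all add: sum_lessThan_add add.assoc)
  then show ?thesis by (simp add: sum_lessThan_add)
qed

lemma tri_index_le_sqrt:
  assumes "tri m \<le> N"
  shows "real m \<le> sqrt (2 * real N)"
proof -
  have "m * m \<le> 2 * N" using two_tri[of m] assms by simp
  then have "real m * real m \<le> 2 * real N" by (metis of_nat_le_iff of_nat_mult of_nat_numeral)
  then show ?thesis using real_sqrt_le_mono by fastforce
qed

(* Errors of at most 2 per complete block, plus at most j for the partial block j <= m,
   add up to O(sqrt N) after N terms. *)
lemma discrepancy_tri_blocks:
  fixes g :: "nat \<Rightarrow> real"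
  assumes g: "\<And>n. 0 \<le> g n \<and> g n \<le> 1" and d: "0 \<le> d" "d \<le> 1"
    and block: "\<And>i. \<bar>(\<Sum>k<Suc i. g (tri i + k)) - real (Suc i) * d\<bar> \<le> 2"
  shows "\<bar>(\<Sum>n<N. g n) - real N * d\<bar> \<le> 3 * sqrt (2 * real N)"
proof -
  obtain m j where mj: "j \<le> m" "N = tri m + j" using tri_decomp by blast
  define err where "err i = (\<Sum>k<Suc i. g (tri i + k)) - real (Suc i) * d" for i
  have partial: "\<bar>(\<Sum>k<j. g (tri m + k)) - real j * d\<bar> \<le> real j"
  proof -
    have "0 \<le> (\<Sum>k<j. g (tri m + k))" "(\<Sum>k<j. g (tri m + k)) \<le> real j"
      using sum_bounded_above[of "{..<j}" "\<lambda>k. g (tri m + k)" 1] g by (auto intro: sum_nonneg)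
    moreover have "0 \<le> real j * d" "real j * d \<le> real j" using d by (auto simp: mult_left_le)
    ultimately show ?thesis by linarith
  qed
  have "real (tri m) = (\<Sum>i<m. real (Suc i))" by (induction m) auto
  then have "(\<Sum>n<N. g n) - real N * d = (\<Sum>i<m. err i) + ((\<Sum>k<j. g (tri m + k)) - real j * d)"
    unfolding mj(2) sum_tri_blocks err_def of_nat_add sum_subtractf sum_distrib_right[symmetric]
    by (simp add: algebra_simps del: sum.lessThan_Suc)
  also have "\<bar>\<dots>\<bar> \<le> (\<Sum>i<m. \<bar>err i\<bar>) + real j"
    using partial by (intro order_trans[OF abs_triangle_ineq add_mono[OF sum_abs]]) auto
  also have "\<dots> \<le> 2 * real m + real j"
    using sum_bounded_above[of "{..<m}" "\<lambda>i. \<bar>err i\<bar>" 2] block unfolding err_def by simp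
  also have "\<dots> \<le> 3 * sqrt (2 * real N)"
    using mj tri_index_le_sqrt[of m N] by simp
  finally show ?thesis .
qed

lemma ratio_tendsto_of_sqrt_error:
  fixes c :: "nat \<Rightarrow> real"
  assumes "\<And>N. \<bar>c N - real N * d\<bar> \<le> C * sqrt (real N)"
  shows "(\<lambda>N. c N / real N) \<longlonglongrightarrow> d"
proof -
  have "(\<lambda>N. c N / real N - d) \<longlonglongrightarrow> 0"
  proof (rule tendsto_0_le[where K=1])
    show "(\<lambda>N. C / sqrt (real N)) \<longlonglongrightarrow> 0" by real_asymp
    show "\<forall>\<^sub>F N in sequentially. norm (c N / real N - d) \<le> norm (C / sqrt (real N)) * 1"
      using eventually_gt_at_top[of "0::nat"]
    proof eventually_elim
      case (elim N)
      then have "norm (c N / real N - d) = \<bar>c N - real N * d\<bar> / real N"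
        by (simp add: field_simps abs_divide)
      also have "\<dots> \<le> C * sqrt (real N) / real N"
        using assms[of N] elim by (simp add: divide_right_mono)
      also have "\<dots> = C / sqrt (real N)"
        using elim real_sqrt_mult_self[of "real N"] by (simp add: field_simps)
      finally show ?case by (simp add: divide_right_mono order_trans)
    qed
  qed
  then show ?thesis using tendsto_add[OF _ tendsto_const[of d]] by fastforce
qed

lemma card_as_indicator_sum:
  "real (card {n. n < (N::nat) \<and> P n}) = (\<Sum>n<N. if P n then 1 else 0)"
proof -
  have "{n. n < N \<and> P n} = {n \<in> {..<N}. P n}" by auto
  then show ?thesis using sum.inter_filter[of "{..<N}" "\<lambda>_. 1::real" P] by simp
qed

lemma ud_of_triangular_blocks:
  fixes u :: "nat \<Rightarrow> real"
  assumes H: "\<And>m k. k \<le> m \<Longrightarrow>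
    real k / real (Suc m) \<le> u (tri m + k) \<and> u (tri m + k) < real (Suc k) / real (Suc m)"
  shows "uniformly_distributed_mod1 u"
  unfolding uniformly_distributed_mod1_def
proof (intro allI impI)
  fix a b :: real assume ab: "0 \<le> a \<and> a < b \<and> b \<le> 1"
  have frac_u: "frac (u n) = u n" for n
  proof -
    obtain m k where mk: "k \<le> m" "n = tri m + k" using tri_decomp by blast
    have "0 \<le> real k / real (Suc m)" "real (Suc k) / real (Suc m) \<le> 1" using mk(1) by simp_all
    with H[OF mk(1)] have "0 \<le> u n" "u n < 1" unfolding mk(2) by linarith+
    then show ?thesis by (simp add: frac_eq)
  qed
  define g where "g n = (if a \<le> u n \<and> u n < b then 1 else 0 :: real)" for n
  have "\<bar>(\<Sum>k<Suc i. g (tri i + k)) - real (Suc i) * (b - a)\<bar> \<le> 2" for i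
    using block_count[of a b "Suc i" "\<lambda>k. u (tri i + k)"] ab H
    unfolding g_def card_as_indicator_sum by simp
  then have "\<bar>(\<Sum>n<N. g n) - real N * (b - a)\<bar> \<le> 3 * sqrt (2 * real N)" for N
    using ab by (intro discrepancy_tri_blocks) (auto simp: g_def)
  then have "\<bar>(\<Sum>n<N. g n) - real N * (b - a)\<bar> \<le> (3 * sqrt 2) * sqrt (real N)" for N
    by (simp add: real_sqrt_mult mult.assoc)
  then show "(\<lambda>N. real (card {n. n < N \<and> a \<le> frac (u n) \<and> frac (u n) < b}) / real N)
      \<longlonglongrightarrow> b - a"
    unfolding frac_u card_as_indicator_sum g_def[symmetric] by (rule ratio_tendsto_of_sqrt_error)
qed

lemma not_ud_of_frac_below:
  assumes "c < 1" and "\<And>n. frac (s n) < c"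
  shows "\<not> uniformly_distributed_mod1 s"
proof
  assume "uniformly_distributed_mod1 s"
  moreover have "0 \<le> c" using assms(2)[of 0] frac_ge_0[of "s 0"] by linarith
  ultimately have "(\<lambda>N. real (card {n. n < N \<and> c \<le> frac (s n) \<and> frac (s n) < 1}) / real N)
      \<longlonglongrightarrow> 1 - c"
    unfolding uniformly_distributed_mod1_def using assms(1) by blast
  moreover have "{n. n < N \<and> c \<le> frac (s n) \<and> frac (s n) < 1} = {}" for N
    using assms(2) by (auto simp: not_le)
  ultimately have "(\<lambda>N. 0) \<longlonglongrightarrow> 1 - c" by simp
  then show False using assms(1) LIMSEQ_unique[OF _ tendsto_const] by fastforce
qed

interpretation Q_ex: cantor_digits Qseq Eseq
  using Eseq_Qseq_bounds(1,2) by unfold_locales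

lemma x_ex_eq: "x_ex = Q_ex.cantor_sum"
  unfolding x_ex_def Q_ex.cantor_sum_def Q_ex.series_term_def Q_ex.partial_prod_def ..

lemma remainder_in_block:
  assumes "k \<le> m"
  shows "real k / real (Suc m) \<le> Q_ex.remainder (tri m + k)
    \<and> Q_ex.remainder (tri m + k) < real (Suc k) / real (Suc m)"
proof -
  have "2 * real k \<le> 2 * real (Suc m) * Q_ex.remainder (tri m + k)"
    and "2 * real (Suc m) * Q_ex.remainder (tri m + k) \<le> 2 * real k + 1"
    using Q_ex.remainder_digit_window[of "tri m + k"] Eseq_Qseq_at[OF assms] by simp_all
  then show ?thesis by (simp add: field_simps)
qed

theorem mainTheorem4:
  shows "Q_distribution_normal Qseq x_ex \<and> \<not> Q_distribution_normal Qseq (x_ex / 2)"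
proof
  show "Q_distribution_normal Qseq x_ex"
    unfolding Q_distribution_normal_def x_ex_eq Q_ex.T_Q_cantor_sum
    using remainder_in_block by (rule ud_of_triangular_blocks)
  have "frac (T_Q Qseq n (x_ex / 2)) = Q_ex.remainder n / 2" for n
    unfolding x_ex_eq Q_ex.T_Q_half_cantor_sum[OF Eseq_Qseq_bounds(3,4)]
    using Q_ex.remainder_nonneg[of n] Q_ex.remainder_lt_1[of n] by (simp add: frac_eq)
  then show "\<not> Q_distribution_normal Qseq (x_ex / 2)"
    unfolding Q_distribution_normal_def
    by (intro not_ud_of_frac_below[of "1/2"]) (use Q_ex.remainder_lt_1 in auto)
qed

end
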